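(* Losanitsch's triangle $(L(n,k))_{n,k\ge0}$ has the property that for each $k\ge 0$ its $k$-th column $(L(n,k))_{n\ge0}$ equals either $(e(n,k))_{n\ge 0}$ or $(o(n,k))_{n\ge0}$, and $L(n,n)=1$ for all $n\ge 0$; moreover it is the unique matrix $(a(n,k))_{n,k\ge0}$ with these two properties.
   Context: $e(n,k)$ (resp. $o(n,k)$) is the number of $k$-element subsets of $\{1,\dots,n\}$ whose sum of elements is even (resp. odd); the empty set counts as even. Losanitsch's triangle $(L(n,k))_{n,k\ge 0}$ is defined by $L(0,k)=[k=0]$, $L(1,k)=[k\le 1]$ for $k\ge0$, $L(n,k)=0$ for $k<0$, and for $n\ge 2$ and all $k$: $L(n,k)=L(n-2,k)+\binom{n-2}{k-1}+L(n-2,k-2)$, where $\binom{m}{j}=0$ for $j<0$ or $j>m$. *)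

theory Defs
  imports Main
begin

definition e_sub :: "nat \<Rightarrow> nat \<Rightarrow> nat" where
  "e_sub n k = card {S. S \<subseteq> {1..n} \<and> card S = k \<and> even (\<Sum>S)}"

definition o_sub :: "nat \<Rightarrow> nat \<Rightarrow> nat" where
  "o_sub n k = card {S. S \<subseteq> {1..n} \<and> card S = k \<and> odd (\<Sum>S)}"

text \<open>Losanitsch's triangle for n, k >= 0 (entries with negative k are 0, which
  is encoded by the guards in the recursion).\<close>
fun losanitsch :: "nat \<Rightarrow> nat \<Rightarrow> nat" where
  "losanitsch 0 k = (if k = 0 then 1 else 0)"
| "losanitsch (Suc 0) k = (if k \<le> 1 then 1 else 0)"
| "losanitsch (Suc (Suc n)) k =
     losanitsch n k + (if k = 0 then 0 else n choose (k - 1))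
     + (if k < 2 then 0 else losanitsch n (k - 2))"

end

theory Submission
  imports Defs
begin

text \<open>Let \<open>c(n,k,b)\<close> count the \<open>k\<close>-subsets of \<open>{1..n}\<close> whose sum has parity \<open>b\<close>.
  Sorting the subsets of \<open>{1..n+2}\<close> by which of \<open>n+1\<close>, \<open>n+2\<close> they contain, and using
  that these two elements have opposite parities, gives
  \<open>c(n+2,k,b) = c(n,k,b) + C(n,k-1) + c(n,k-2,\<not>b)\<close>: Losanitsch's recurrence up to
  the flip of parity between columns \<open>k-2\<close> and \<open>k\<close>. Hence column \<open>k\<close> of the
  triangle is \<open>c(-,k,b\<^sub>k)\<close>, where \<open>b\<^sub>k\<close> is the parity of \<open>1+\<dots>+k\<close>. Since
  \<open>c(k,k,b\<^sub>k) = 1\<close> and \<open>c(k,k,\<not>b\<^sub>k) = 0\<close>, the diagonal condition singles out this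
  parity in every column, which gives uniqueness.\<close>

lemma card_subsets_insert:
  assumes "finite A" "a \<notin> A"
  shows "card {S. S \<subseteq> insert a A \<and> card S = Suc k \<and> P S}
    = card {S. S \<subseteq> A \<and> card S = Suc k \<and> P S} + card {T. T \<subseteq> A \<and> card T = k \<and> P (insert a T)}"
proof -
  let ?without = "{S. S \<subseteq> A \<and> card S = Suc k \<and> P S}"
  let ?with = "{T. T \<subseteq> A \<and> card T = k \<and> P (insert a T)}"
  have finite_subsets: "finite {S. S \<subseteq> B \<and> Q S}" if "finite B" for B and Q :: "'a set \<Rightarrow> bool"
    by (rule finite_subset[of _ "Pow B"]) (auto simp: that)
  have "{S. S \<subseteq> insert a A \<and> card S = Suc k \<and> P S} = ?without \<union> insert a ` ?with"
  proof (intro set_eqI iffI)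
    fix S assume S: "S \<in> {S. S \<subseteq> insert a A \<and> card S = Suc k \<and> P S}"
    then have "finite S" using assms(1) finite_subset by blast
    show "S \<in> ?without \<union> insert a ` ?with"
    proof (cases "a \<in> S")
      case True
      then have S_eq: "insert a (S - {a}) = S"
        by blast
      have "S - {a} \<subseteq> A" "card (S - {a}) = k"
        using S \<open>finite S\<close> True by auto
      moreover have "P (insert a (S - {a}))"
        using S by (simp only: S_eq mem_Collect_eq)
      ultimately have "insert a (S - {a}) \<in> ?without \<union> insert a ` ?with"
        by blast
      then show ?thesis
        by (simp only: S_eq)
    qed (use S in auto)
  next
    fix S assume "S \<in> ?without \<union> insert a ` ?with"
    then show "S \<in> {S. S \<subseteq> insert a A \<and> card S = Suc k \<and> P S}"
    proof
      assume "S \<in> ?without"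
      then show ?thesis
        by (auto intro: subset_insertI2)
    next
      assume "S \<in> insert a ` ?with"
      then obtain T where "T \<subseteq> A" "card T = k" "P (insert a T)" "S = insert a T"
        by blast
      moreover have "finite T" "a \<notin> T"
        using calculation(1) assms finite_subset by auto
      ultimately show ?thesis
        by auto
    qed
  qed
  moreover have "?without \<inter> insert a ` ?with = {}"
    using assms(2) by auto
  moreover have "inj_on (insert a) ?with"
  proof (rule inj_onI)
    fix T U assume "T \<in> ?with" "U \<in> ?with" and insert_eq: "insert a T = insert a U"
    then have "a \<notin> T" "a \<notin> U"
      using assms(2) by auto
    then show "T = U"
      using insert_eq by (metis Diff_insert_absorb)
  qed
  moreover have "finite ?without" "finite (insert a ` ?with)"
    using assms(1) finite_subsets by auto
  ultimately show ?thesis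
    by (simp add: card_Un_disjoint card_image)
qed

definition parity_subsets :: "nat \<Rightarrow> nat \<Rightarrow> bool \<Rightarrow> nat" where
  "parity_subsets n k b = card {S. S \<subseteq> {1..n} \<and> card S = k \<and> odd (\<Sum>S) = b}"

lemma e_sub_eq_parity_subsets: "e_sub n k = parity_subsets n k False"
  unfolding e_sub_def parity_subsets_def by simp

lemma o_sub_eq_parity_subsets: "o_sub n k = parity_subsets n k True"
  unfolding o_sub_def parity_subsets_def by simp

lemma parity_subsets_0: "parity_subsets n 0 b = (if b then 0 else 1)"
proof -
  have "{S. S \<subseteq> {1..n} \<and> card S = 0 \<and> odd (\<Sum>S) = b} = (if b then {} else {{}})"
    using finite_subset[of _ "{1..n}"] by (auto simp: card_eq_0_iff)
  then show ?thesis
    unfolding parity_subsets_def by simp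
qed

lemma parity_subsets_add_not: "parity_subsets n k b + parity_subsets n k (\<not> b) = n choose k"
proof -
  let ?par = "\<lambda>b. {S. S \<subseteq> {1..n} \<and> card S = k \<and> odd (\<Sum>S) = b}"
  have finite_par: "finite (?par c)" for c
    by (rule finite_subset[of _ "Pow {1..n}"]) auto
  have "?par b \<inter> ?par (\<not> b) = {}"
    by auto
  with finite_par[of b] finite_par[of "\<not> b"]
  have "card (?par b) + card (?par (\<not> b)) = card (?par b \<union> ?par (\<not> b))"
    by (rule card_Un_disjoint[symmetric])
  also have "?par b \<union> ?par (\<not> b) = {S. S \<subseteq> {1..n} \<and> card S = k}"
    by auto
  finally show ?thesis
    unfolding parity_subsets_def by (simp add: n_subsets)
qed

lemma parity_subsets_eq_0: "n < k \<Longrightarrow> parity_subsets n k b = 0"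
  using parity_subsets_add_not[of n k b] by (simp add: binomial_eq_0)

lemma parity_subsets_Suc:
  "parity_subsets (Suc n) (Suc k) b = parity_subsets n (Suc k) b + parity_subsets n k (b \<noteq> odd (Suc n))"
proof -
  have "\<Sum>(insert (Suc n) T) = Suc n + \<Sum>T" if "T \<subseteq> {1..n}" for T
    using that finite_subset[OF that] by (subst sum.insert) auto
  then have "{T. T \<subseteq> {1..n} \<and> card T = k \<and> odd (\<Sum>(insert (Suc n) T)) = b}
      = {T. T \<subseteq> {1..n} \<and> card T = k \<and> odd (\<Sum>T) = (b \<noteq> odd (Suc n))}"
    by (intro Collect_cong) auto
  then show ?thesis
    unfolding parity_subsets_def
    using card_subsets_insert[of "{1..n}" "Suc n" k "\<lambda>S. odd (\<Sum>S) = b"]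
    by (simp add: atLeastAtMostSuc_conv)
qed

lemma parity_subsets_Suc_Suc:
  "parity_subsets (Suc (Suc n)) (Suc k) b
    = parity_subsets n (Suc k) b + (n choose k) + (if k = 0 then 0 else parity_subsets n (k - 1) (\<not> b))"
proof (cases k)
  case 0
  then show ?thesis
    by (cases "even n") (simp_all add: parity_subsets_Suc parity_subsets_0)
next
  case (Suc j)
  let ?b' = "b \<noteq> odd (Suc (Suc n))"
  have "parity_subsets (Suc (Suc n)) (Suc k) b = parity_subsets n (Suc k) b
      + (parity_subsets n k (\<not> ?b') + parity_subsets n k ?b') + parity_subsets n j (?b' \<noteq> odd (Suc n))"
    using Suc by (simp add: parity_subsets_Suc)
  moreover have "(?b' \<noteq> odd (Suc n)) = (\<not> b)"
    by (cases "even n") simp_all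
  ultimately show ?thesis
    using Suc parity_subsets_add_not[of n k ?b'] by (simp add: add.commute)
qed

text \<open>The parity of \<open>1 + \<dots> + k\<close>.\<close>

fun column_parity :: "nat \<Rightarrow> bool" where
  "column_parity 0 = False"
| "column_parity (Suc 0) = True"
| "column_parity (Suc (Suc k)) = (\<not> column_parity k)"

lemma losanitsch_eq_parity_subsets: "losanitsch n k = parity_subsets n k (column_parity k)"
proof (induction n k rule: losanitsch.induct)
  case (1 k)
  then show ?case
    by (cases k) (simp_all add: parity_subsets_0 parity_subsets_eq_0)
next
  case (2 k)
  then show ?case
    by (cases k rule: column_parity.cases)
      (simp_all add: parity_subsets_0 parity_subsets_Suc parity_subsets_eq_0)
next
  case (3 n k)
  show ?case
  proof (cases k rule: column_parity.cases)
    case 1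
    then show ?thesis using "3.IH" by (simp add: parity_subsets_0)
  next
    case 2
    then show ?thesis using "3.IH" by (simp add: parity_subsets_Suc_Suc)
  next
    case (3 j)
    then show ?thesis using "3.IH" by (simp add: parity_subsets_Suc_Suc)
  qed
qed

lemma losanitsch_diagonal: "losanitsch n n = 1"
proof (induction n rule: nat_induct2)
  case (step n)
  then show ?case
    using losanitsch_eq_parity_subsets[of n "n + 2"] by (simp add: parity_subsets_eq_0)
qed simp_all

lemma parity_subsets_diagonal: "parity_subsets k k b = (if b = column_parity k then 1 else 0)"
proof -
  have "parity_subsets k k (column_parity k) = 1"
    using losanitsch_diagonal losanitsch_eq_parity_subsets by metis
  moreover have "parity_subsets k k (column_parity k) + parity_subsets k k (\<not> column_parity k) = 1"
    using parity_subsets_add_not by simp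
  ultimately show ?thesis
    by (cases "b = column_parity k") auto
qed

lemma even_or_odd_column_iff:
  "((\<forall>n. a n k = e_sub n k) \<or> (\<forall>n. a n k = o_sub n k)) \<longleftrightarrow> (\<exists>b. \<forall>n. a n k = parity_subsets n k b)"
  unfolding ex_bool_eq e_sub_eq_parity_subsets o_sub_eq_parity_subsets by blast

theorem proposition3p1:
  shows "(\<forall>k. (\<forall>n. losanitsch n k = e_sub n k) \<or> (\<forall>n. losanitsch n k = o_sub n k))
    \<and> (\<forall>n. losanitsch n n = 1)
    \<and> (\<forall>a :: nat \<Rightarrow> nat \<Rightarrow> nat.
          ((\<forall>k. (\<forall>n. a n k = e_sub n k) \<or> (\<forall>n. a n k = o_sub n k))
           \<and> (\<forall>n. a n n = 1)) \<longrightarrow> a = losanitsch)"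
proof (intro conjI allI impI)
  fix k
  show "(\<forall>n. losanitsch n k = e_sub n k) \<or> (\<forall>n. losanitsch n k = o_sub n k)"
    unfolding even_or_odd_column_iff using losanitsch_eq_parity_subsets by blast
next
  show "losanitsch n n = 1" for n
    by (rule losanitsch_diagonal)
next
  fix a :: "nat \<Rightarrow> nat \<Rightarrow> nat"
  assume "(\<forall>k. (\<forall>n. a n k = e_sub n k) \<or> (\<forall>n. a n k = o_sub n k)) \<and> (\<forall>n. a n n = 1)"
  then have columns: "\<forall>k. \<exists>b. \<forall>n. a n k = parity_subsets n k b" and diagonal: "\<forall>k. a k k = 1"
    unfolding even_or_odd_column_iff by blast+
  show "a = losanitsch"
  proof (intro ext)
    fix n k
    obtain b where b: "\<forall>n. a n k = parity_subsets n k b"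
      using columns by blast
    have "parity_subsets k k b = 1"
      using b diagonal by metis
    then have "b = column_parity k"
      by (metis parity_subsets_diagonal zero_neq_one)
    then show "a n k = losanitsch n k"
      using b losanitsch_eq_parity_subsets by simp
  qed
qed

end
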